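(* For every integer $n\ge 54$, the number of arrays $\mathbf{X}\in\{0,1\}^{n\times n}$ with $|\mathbb{D}_{1,1}(\mathbf{X})|<\frac{n^2}{2}$ is at most $\sqrt{2}\cdot 2^{n^2-3n}$.
   Context: $\mathbb{D}_{1,1}(\mathbf{X})$ denotes the set of distinct $(n-1)\times(n-1)$ arrays obtainable from $\mathbf{X}$ by deleting one row and one column. (Such arrays are called bad in the paper, and the set of them is denoted $\mathcal{B}_n$.) *)

theory Defs
  imports Complex_Main
begin

definition bin_arrays :: "nat \<Rightarrow> bool list list set" where
  "bin_arrays n = {X. length X = n \<and> (\<forall>r\<in>set X. length r = n)}"

definition del_at :: "nat \<Rightarrow> 'a list \<Rightarrow> 'a list" where
  "del_at i xs = take i xs @ drop (Suc i) xs"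

definition del_row_col :: "nat \<Rightarrow> nat \<Rightarrow> bool list list \<Rightarrow> bool list list" where
  "del_row_col i j X = map (del_at j) (del_at i X)"

definition D11 :: "bool list list \<Rightarrow> bool list list set" where
  "D11 X = {del_row_col i j X | i j. i < length X \<and> j < length X}"

end

theory Submission
  imports Defs
begin

text \<open>
  Call r a collision row of X if row r+1 arises from row r by deleting one entry and inserting
  one. If deleting row i and column j gives the same array as deleting row i' > i and column
  j', then comparing row i of the two results shows that i is a collision row; by transposition
  the same holds for columns. Hence the deletion map is injective on non-collision rows times
  non-collision columns, and an array with fewer than n/4 collision rows and fewer than n/4
  collision columns has at least (3n/4)^2 > n^2/2 distinct deletions. Conversely, a collision
  row leaves at most 2n^2 choices for the next row instead of 2^n, so the arrays with at least
  K = ceil(n/4) collision rows (or columns) number at most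
  2 (n-1 choose K) 2^n (2n^2)^K 2^(n(n-1-K)), which is at most 2^(n^2-3n) as soon as
  2n^2 2^16 <= 2^n.
\<close>

definition ins_at :: "nat \<Rightarrow> 'a \<Rightarrow> 'a list \<Rightarrow> 'a list" where
  "ins_at j b xs = take j xs @ b # drop j xs"

lemma length_del_at: "i < length xs \<Longrightarrow> length (del_at i xs) = length xs - 1"
  by (simp add: del_at_def)

lemma nth_del_at:
  "i < length xs \<Longrightarrow> r < length xs - 1 \<Longrightarrow> del_at i xs ! r = xs ! (if r < i then r else Suc r)"
  by (auto simp: del_at_def nth_append min_def)

lemma ins_at_nth_del_at: "j < length xs \<Longrightarrow> ins_at j (xs ! j) (del_at j xs) = xs"
  by (simp add: ins_at_def del_at_def min_def id_take_nth_drop[symmetric])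

definition del_ins_neighbours :: "nat \<Rightarrow> bool list \<Rightarrow> bool list set" where
  "del_ins_neighbours n u = {ins_at j b (del_at j' u) | j j' b. j < n \<and> j' < n}"

lemma del_ins_neighbours_image:
  "del_ins_neighbours n u = (\<lambda>(j, j', b). ins_at j b (del_at j' u)) ` ({..<n} \<times> {..<n} \<times> UNIV)"
  unfolding del_ins_neighbours_def by (rule set_eqI) (auto simp: image_iff)

lemma finite_del_ins_neighbours: "finite (del_ins_neighbours n u)"
  by (simp add: del_ins_neighbours_image)

lemma card_del_ins_neighbours_le: "card (del_ins_neighbours n u) \<le> 2 * n * n"
proof -
  have "card (del_ins_neighbours n u) \<le> card ({..<n} \<times> {..<n} \<times> (UNIV :: bool set))"
    unfolding del_ins_neighbours_image by (rule card_image_le) simp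
  also have "\<dots> = 2 * n * n"
    by (simp add: card_cartesian_product)
  finally show ?thesis .
qed

lemma del_ins_neighboursI:
  assumes "j < length w" "j < n" "j' < n" "del_at j w = del_at j' u"
  shows "w \<in> del_ins_neighbours n u"
proof -
  have "w = ins_at j (w ! j) (del_at j' u)"
    using assms(1,4) ins_at_nth_del_at by metis
  then show ?thesis
    using assms(2,3) unfolding del_ins_neighbours_def by blast
qed

lemma bin_arraysD:
  "X \<in> bin_arrays n \<Longrightarrow> length X = n"
  "X \<in> bin_arrays n \<Longrightarrow> r < n \<Longrightarrow> length (X ! r) = n"
  by (auto simp: bin_arrays_def)

lemma bin_arraysI:
  "length X = n \<Longrightarrow> (\<And>r. r < n \<Longrightarrow> length (X ! r) = n) \<Longrightarrow> X \<in> bin_arrays n"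
  by (auto simp: bin_arrays_def in_set_conv_nth)

lemma bin_arrays_eqI:
  assumes "X \<in> bin_arrays n" "Y \<in> bin_arrays n"
    and "\<And>r c. r < n \<Longrightarrow> c < n \<Longrightarrow> X ! r ! c = Y ! r ! c"
  shows "X = Y"
  using assms by (auto intro!: nth_equalityI simp: bin_arraysD)

lemma nth_del_row_col:
  "i < length X \<Longrightarrow> r < length X - 1 \<Longrightarrow>
    del_row_col i j X ! r = del_at j (X ! (if r < i then r else Suc r))"
  by (simp add: del_row_col_def length_del_at nth_del_at)

lemma del_row_col_in_bin_arrays:
  assumes "X \<in> bin_arrays n" "i < n" "j < n"
  shows "del_row_col i j X \<in> bin_arrays (n - 1)"
  using assms by (intro bin_arraysI) (auto simp: del_row_col_def length_del_at bin_arraysD nth_del_at)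

lemma nth_nth_del_row_col:
  assumes "X \<in> bin_arrays n" "i < n" "j < n" "r < n - 1" "c < n - 1"
  shows "del_row_col i j X ! r ! c = X ! (if r < i then r else Suc r) ! (if c < j then c else Suc c)"
  using assms by (simp add: nth_del_row_col bin_arraysD nth_del_at)

lemma transpose_bin_array:
  assumes "X \<in> bin_arrays n"
  shows "transpose X = map (\<lambda>c. map (\<lambda>row. row ! c) X) [0..<n]"
proof -
  have "transpose X = map (\<lambda>c. map (\<lambda>r. X ! r ! c) [0..<length X]) [0..<n]"
    using bin_arraysD[OF assms] by (intro transpose_rectangle) auto
  also have "\<dots> = map (\<lambda>c. map (\<lambda>row. row ! c) X) [0..<n]"
    by (intro arg_cong[where f = "map _"] ext nth_equalityI) simp_all
  finally show ?thesis .
qed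

lemma transpose_in_bin_arrays: "X \<in> bin_arrays n \<Longrightarrow> transpose X \<in> bin_arrays n"
  by (intro bin_arraysI) (simp_all add: transpose_bin_array bin_arraysD)

lemma nth_nth_transpose_bin_array:
  "X \<in> bin_arrays n \<Longrightarrow> r < n \<Longrightarrow> c < n \<Longrightarrow> transpose X ! r ! c = X ! c ! r"
  by (simp add: transpose_bin_array bin_arraysD)

lemma transpose_transpose_bin_array:
  assumes "X \<in> bin_arrays n"
  shows "transpose (transpose X) = X"
proof (rule bin_arrays_eqI)
  fix r c assume "r < n" "c < n"
  then show "transpose (transpose X) ! r ! c = X ! r ! c"
    using assms by (simp add: nth_nth_transpose_bin_array[OF transpose_in_bin_arrays[OF assms]]
        nth_nth_transpose_bin_array[OF assms])
qed (simp_all add: assms transpose_in_bin_arrays)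

lemma transpose_del_row_col:
  assumes X: "X \<in> bin_arrays n" and "i < n" "j < n"
  shows "transpose (del_row_col i j X) = del_row_col j i (transpose X)"
proof (rule bin_arrays_eqI)
  show "transpose (del_row_col i j X) \<in> bin_arrays (n - 1)"
    by (intro transpose_in_bin_arrays del_row_col_in_bin_arrays assms)
  show "del_row_col j i (transpose X) \<in> bin_arrays (n - 1)"
    by (intro del_row_col_in_bin_arrays transpose_in_bin_arrays assms)
  fix r c assume "r < n - 1" "c < n - 1"
  then show "transpose (del_row_col i j X) ! r ! c = del_row_col j i (transpose X) ! r ! c"
    using assms transpose_in_bin_arrays[OF X]
    by (simp add: nth_nth_transpose_bin_array[OF del_row_col_in_bin_arrays]
        nth_nth_del_row_col nth_nth_transpose_bin_array[OF X])
qed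

definition collision_rows :: "bool list list \<Rightarrow> nat set" where
  "collision_rows X = {r. Suc r < length X \<and> X ! Suc r \<in> del_ins_neighbours (length X) (X ! r)}"

lemma collision_rows_subset: "collision_rows X \<subseteq> {..<length X - 1}"
  by (auto simp: collision_rows_def)

lemma del_row_col_eq_imp_collision_row:
  assumes X: "X \<in> bin_arrays n" and "i < i'" "i' < n" "j < n" "j' < n"
    and eq: "del_row_col i j X = del_row_col i' j' X"
  shows "i \<in> collision_rows X"
proof -
  have "del_at j (X ! Suc i) = del_at j' (X ! i)"
    using nth_del_row_col[of i X i j] nth_del_row_col[of i' X i j'] eq assms(2-5) bin_arraysD(1)[OF X]
    by simp
  then have "X ! Suc i \<in> del_ins_neighbours n (X ! i)"
    using assms(2-5) bin_arraysD[OF X] by (intro del_ins_neighboursI[of j]) simp_all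
  then show ?thesis
    using assms(2,3) bin_arraysD(1)[OF X] by (simp add: collision_rows_def)
qed

lemma del_row_col_eq_imp_collision_column:
  assumes X: "X \<in> bin_arrays n" and "j < j'" "j' < n" "i < n" "i' < n"
    and eq: "del_row_col i j X = del_row_col i' j' X"
  shows "j \<in> collision_rows (transpose X)"
proof (rule del_row_col_eq_imp_collision_row[OF transpose_in_bin_arrays[OF X]])
  show "del_row_col j i (transpose X) = del_row_col j' i' (transpose X)"
    using eq assms(2-5) by (simp flip: transpose_del_row_col[OF X])
qed (use assms in auto)

lemma inj_on_del_row_col:
  assumes X: "X \<in> bin_arrays n"
  shows "inj_on (\<lambda>(i, j). del_row_col i j X)
           (({..<n} - collision_rows X) \<times> ({..<n} - collision_rows (transpose X)))"
proof (rule inj_onI, clarify)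
  fix i j i' j'
  assume i: "i < n" "i \<notin> collision_rows X" and i': "i' < n" "i' \<notin> collision_rows X"
    and j: "j < n" "j \<notin> collision_rows (transpose X)"
    and j': "j' < n" "j' \<notin> collision_rows (transpose X)"
    and eq: "del_row_col i j X = del_row_col i' j' X"
  have "i = i'"
    using del_row_col_eq_imp_collision_row[OF X _ _ _ _ eq]
      del_row_col_eq_imp_collision_row[OF X _ _ _ _ eq[symmetric]] i i' j j'
    by (metis linorder_neqE_nat)
  moreover have "j = j'"
    using del_row_col_eq_imp_collision_column[OF X _ _ _ _ eq]
      del_row_col_eq_imp_collision_column[OF X _ _ _ _ eq[symmetric]] i i' j j'
    by (metis linorder_neqE_nat)
  ultimately show "i = i' \<and> j = j'" ..
qed

lemma card_D11_ge:
  assumes X: "X \<in> bin_arrays n"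
  shows "(n - card (collision_rows X)) * (n - card (collision_rows (transpose X))) \<le> card (D11 X)"
proof -
  let ?R = "{..<n} - collision_rows X" and ?C = "{..<n} - collision_rows (transpose X)"
  let ?del = "\<lambda>(i, j). del_row_col i j X"
  have "n - card (collision_rows Y) \<le> card ({..<n} - collision_rows Y)" if "length Y = n" for Y
    using diff_card_le_card_Diff[of "collision_rows Y" "{..<n}"] collision_rows_subset[of Y] that
    by (simp add: finite_subset)
  then have "(n - card (collision_rows X)) * (n - card (collision_rows (transpose X)))
      \<le> card (?R \<times> ?C)"
    using bin_arraysD(1) X transpose_in_bin_arrays[OF X]
    by (simp add: card_cartesian_product mult_le_mono)
  also have "\<dots> = card (?del ` (?R \<times> ?C))"
    by (rule card_image[OF inj_on_del_row_col[OF X], symmetric])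
  also have "\<dots> \<le> card (D11 X)"
  proof (rule card_mono)
    have "D11 X = ?del ` ({..<n} \<times> {..<n})"
      using bin_arraysD(1)[OF X] unfolding D11_def by auto
    then show "finite (D11 X)" and "?del ` (?R \<times> ?C) \<subseteq> D11 X"
      by auto
  qed
  finally show ?thesis .
qed

lemma card_D11_ge_half_sq:
  assumes X: "X \<in> bin_arrays n"
    and "4 * card (collision_rows X) < n" "4 * card (collision_rows (transpose X)) < n"
  shows "n ^ 2 \<le> 2 * card (D11 X)"
proof -
  have "3 * n + 1 \<le> 4 * (n - card (collision_rows X))"
    and "3 * n + 1 \<le> 4 * (n - card (collision_rows (transpose X)))"
    using assms(2,3) by linarith+
  from mult_le_mono[OF this]
  have "(3 * n + 1) * (3 * n + 1)
      \<le> 16 * ((n - card (collision_rows X)) * (n - card (collision_rows (transpose X))))"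
    by (simp add: algebra_simps)
  also have "\<dots> \<le> 16 * card (D11 X)"
    using card_D11_ge[OF X] by simp
  finally show ?thesis
    by (simp add: power2_eq_square algebra_simps)
qed

definition walks :: "'a set \<Rightarrow> (nat \<Rightarrow> 'a \<Rightarrow> 'a \<Rightarrow> bool) \<Rightarrow> nat \<Rightarrow> 'a list set" where
  "walks A P m = {xs. length xs = Suc m \<and> set xs \<subseteq> A \<and> (\<forall>r<m. P r (xs ! r) (xs ! Suc r))}"

lemma finite_walks: "finite A \<Longrightarrow> finite (walks A P m)"
  by (rule finite_subset[OF _ finite_lists_length_eq[of A "Suc m"]]) (auto simp: walks_def)

lemma walks_Suc_subset:
  "walks A P (Suc m) \<subseteq> (\<lambda>(xs, w). xs @ [w]) ` (SIGMA xs:walks A P m. {w \<in> A. P m (xs ! m) w})"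
proof
  fix ys assume ys: "ys \<in> walks A P (Suc m)"
  then have "length ys = Suc (Suc m)"
    by (simp add: walks_def)
  then obtain xs w where ys_eq: "ys = xs @ [w]" and "length xs = Suc m"
    by (cases ys rule: rev_cases) auto
  have steps: "\<forall>r<Suc m. P r (ys ! r) (ys ! Suc r)" and "set ys \<subseteq> A"
    using ys by (auto simp: walks_def)
  have "P r (xs ! r) (xs ! Suc r)" if "r < m" for r
    using steps[rule_format, of r] that \<open>length xs = Suc m\<close> by (simp add: ys_eq nth_append)
  then have "xs \<in> walks A P m" and "w \<in> {w \<in> A. P m (xs ! m) w}"
    using steps[rule_format, of m] \<open>set ys \<subseteq> A\<close> \<open>length xs = Suc m\<close>
    by (auto simp: walks_def ys_eq nth_append)
  then show "ys \<in> (\<lambda>(xs, w). xs @ [w]) ` (SIGMA xs:walks A P m. {w \<in> A. P m (xs ! m) w})"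
    using ys_eq by (auto intro!: image_eqI[where x = "(xs, w)"])
qed

lemma card_walks_le:
  assumes "finite A" and "\<And>r u. r < m \<Longrightarrow> u \<in> A \<Longrightarrow> card {w \<in> A. P r u w} \<le> b r"
  shows "card (walks A P m) \<le> card A * (\<Prod>r<m. b r)"
  using assms(2)
proof (induction m)
  case 0
  have "walks A P 0 = (\<lambda>w. [w]) ` A"
    by (auto simp: walks_def length_Suc_conv)
  then show ?case
    using card_image_le[OF assms(1), of "\<lambda>w. [w]"] by simp
next
  case (Suc m)
  let ?next = "\<lambda>xs. {w \<in> A. P m (xs ! m) w}"
  have finite_next: "finite (?next xs)" for xs
    using assms(1) by simp
  have "card (walks A P (Suc m)) \<le> card ((\<lambda>(xs, w). xs @ [w]) ` (SIGMA xs:walks A P m. ?next xs))"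
    by (intro card_mono finite_imageI finite_SigmaI finite_walks assms(1) finite_next walks_Suc_subset)
  also have "\<dots> \<le> card (SIGMA xs:walks A P m. ?next xs)"
    by (rule card_image_le) (simp add: finite_walks assms(1))
  also have "\<dots> = (\<Sum>xs\<in>walks A P m. card (?next xs))"
    using finite_walks[OF assms(1)] finite_next by simp
  also have "\<dots> \<le> (\<Sum>xs\<in>walks A P m. b m)"
  proof (rule sum_mono)
    fix xs assume "xs \<in> walks A P m"
    then have "xs ! m \<in> A"
      by (auto simp: walks_def)
    then show "card (?next xs) \<le> b m"
      by (intro Suc.prems) simp_all
  qed
  also have "\<dots> \<le> card A * (\<Prod>r<m. b r) * b m"
    using Suc by simp
  finally show ?case
    by (simp add: mult.assoc)
qed

lemma prod_if_mem_subset: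
  assumes "S \<subseteq> {..<m}"
  shows "(\<Prod>r<m. if r \<in> S then a else b) = a ^ card S * b ^ (m - card S)"
proof -
  have "finite S"
    using assms finite_subset by blast
  have "(\<Prod>r<m. if r \<in> S then a else b) = (\<Prod>r\<in>S. a) * (\<Prod>r\<in>{..<m} - S. b)"
    using assms by (simp add: prod.If_cases Int_absorb1 Diff_eq)
  also have "\<dots> = a ^ card S * b ^ (m - card S)"
    using assms \<open>finite S\<close> by (simp add: card_Diff_subset)
  finally show ?thesis .
qed

lemma finite_bin_arrays: "finite (bin_arrays n)"
proof -
  have "bin_arrays n = {X. set X \<subseteq> {w :: bool list. length w = n} \<and> length X = n}"
    by (auto simp: bin_arrays_def)
  moreover have "finite {w :: bool list. length w = n}"
    using finite_lists_length_eq[of "UNIV :: bool set" n] by simp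
  ultimately show ?thesis
    by (simp add: finite_lists_length_eq)
qed

lemma card_bin_arrays_collision_superset_le:
  assumes "0 < n" and S: "S \<subseteq> {..<n - 1}"
  shows "card {X \<in> bin_arrays n. S \<subseteq> collision_rows X}
           \<le> 2 ^ n * ((2 * n * n) ^ card S * (2 ^ n) ^ (n - 1 - card S))"
proof -
  let ?A = "{w :: bool list. length w = n}"
  let ?P = "\<lambda>r u w. r \<in> S \<longrightarrow> w \<in> del_ins_neighbours n u"
  let ?b = "\<lambda>r. if r \<in> S then 2 * n * n else 2 ^ n"
  have finite_A: "finite ?A" and card_A: "card ?A = 2 ^ n"
    using finite_lists_length_eq[of "UNIV :: bool set" n] card_lists_length_eq[of "UNIV :: bool set" n]
    by simp_all
  have "{X \<in> bin_arrays n. S \<subseteq> collision_rows X} \<subseteq> walks ?A ?P (n - 1)"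
    using assms by (auto simp: bin_arrays_def collision_rows_def walks_def)
  then have "card {X \<in> bin_arrays n. S \<subseteq> collision_rows X} \<le> card (walks ?A ?P (n - 1))"
    by (intro card_mono finite_walks finite_A)
  also have "\<dots> \<le> card ?A * (\<Prod>r<n - 1. ?b r)"
  proof (rule card_walks_le[OF finite_A])
    fix r u
    show "card {w \<in> ?A. ?P r u w} \<le> ?b r"
    proof (cases "r \<in> S")
      case True
      then have "card {w \<in> ?A. ?P r u w} \<le> card (del_ins_neighbours n u)"
        by (intro card_mono finite_del_ins_neighbours) auto
      then show ?thesis
        using card_del_ins_neighbours_le[of n u] True by simp
    qed (simp add: card_A)
  qed
  also have "\<dots> = 2 ^ n * ((2 * n * n) ^ card S * (2 ^ n) ^ (n - 1 - card S))"
    using S by (simp add: card_A prod_if_mem_subset)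
  finally show ?thesis .
qed

lemma card_bin_arrays_many_collision_rows_le:
  assumes "0 < n"
  shows "card {X \<in> bin_arrays n. K \<le> card (collision_rows X)}
           \<le> (n - 1 choose K) * (2 ^ n * ((2 * n * n) ^ K * (2 ^ n) ^ (n - 1 - K)))"
proof -
  define Subs where "Subs = {S. S \<subseteq> {..<n - 1} \<and> card S = K}"
  have "finite Subs"
    unfolding Subs_def by (rule finite_subset[of _ "Pow {..<n - 1}"]) auto
  have "{X \<in> bin_arrays n. K \<le> card (collision_rows X)}
          \<subseteq> (\<Union>S\<in>Subs. {X \<in> bin_arrays n. S \<subseteq> collision_rows X})"
  proof clarify
    fix X assume X: "X \<in> bin_arrays n" and "K \<le> card (collision_rows X)"
    then obtain S where "S \<subseteq> collision_rows X" "card S = K"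
      by (meson obtain_subset_with_card_n)
    moreover have "collision_rows X \<subseteq> {..<n - 1}"
      using collision_rows_subset bin_arraysD(1)[OF X] by blast
    ultimately show "X \<in> (\<Union>S\<in>Subs. {X \<in> bin_arrays n. S \<subseteq> collision_rows X})"
      using X unfolding Subs_def by blast
  qed
  moreover have "finite {X \<in> bin_arrays n. S \<subseteq> collision_rows X}" for S
    using finite_bin_arrays by simp
  ultimately have "card {X \<in> bin_arrays n. K \<le> card (collision_rows X)}
               \<le> card (\<Union>S\<in>Subs. {X \<in> bin_arrays n. S \<subseteq> collision_rows X})"
    using \<open>finite Subs\<close> by (intro card_mono) auto
  also have "\<dots> \<le> (\<Sum>S\<in>Subs. card {X \<in> bin_arrays n. S \<subseteq> collision_rows X})"
    using \<open>finite Subs\<close> by (rule card_UN_le)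
  also have "\<dots> \<le> (\<Sum>S\<in>Subs. 2 ^ n * ((2 * n * n) ^ K * (2 ^ n) ^ (n - 1 - K)))"
    using card_bin_arrays_collision_superset_le[OF assms] by (intro sum_mono) (auto simp: Subs_def)
  also have "\<dots> = (n - 1 choose K) * (2 ^ n * ((2 * n * n) ^ K * (2 ^ n) ^ (n - 1 - K)))"
    using n_subsets[of "{..<n - 1}" K] by (simp add: Subs_def)
  finally show ?thesis .
qed

lemma card_bin_arrays_transpose:
  "card {X \<in> bin_arrays n. P (transpose X)} = card {X \<in> bin_arrays n. P X}"
proof (rule bij_betw_same_card)
  show "bij_betw transpose {X \<in> bin_arrays n. P (transpose X)} {X \<in> bin_arrays n. P X}"
  proof (rule bij_betw_byWitness[where f' = transpose])
    show "\<forall>X\<in>{X \<in> bin_arrays n. P (transpose X)}. transpose (transpose X) = X"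
      "\<forall>X\<in>{X \<in> bin_arrays n. P X}. transpose (transpose X) = X"
      using transpose_transpose_bin_array by blast+
    show "transpose ` {X \<in> bin_arrays n. P (transpose X)} \<subseteq> {X \<in> bin_arrays n. P X}"
      "transpose ` {X \<in> bin_arrays n. P X} \<subseteq> {X \<in> bin_arrays n. P (transpose X)}"
      using transpose_in_bin_arrays transpose_transpose_bin_array by auto
  qed
qed

lemma two_mult_sq_mult_pow16_le_pow2: "54 \<le> n \<Longrightarrow> 2 * n * n * 2 ^ 16 \<le> (2::nat) ^ n"
proof (induction n rule: dec_induct)
  case (step m)
  have "54 * m \<le> m * m"
    using step(1) by simp
  moreover have "Suc m * Suc m = m * m + 2 * m + 1"
    by simp
  ultimately have "Suc m * Suc m \<le> 2 * (m * m)"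
    using step(1) by linarith
  then have "2 * Suc m * Suc m * 2 ^ 16 \<le> 2 * (2 * m * m * 2 ^ 16)"
    by simp
  also have "\<dots> \<le> 2 ^ Suc m"
    using step(3) by simp
  finally show ?case .
qed simp

lemma collision_count_bound_le_pow2:
  assumes n: "54 \<le> n" and K: "n \<le> 4 * K" "K \<le> n - 1"
  shows "2 * ((n - 1 choose K) * (2 ^ n * ((2 * n * n) ^ K * (2 ^ n) ^ (n - 1 - K))))
           \<le> (2::nat) ^ (n * n - 3 * n)"
proof -
  have "(2 * n * n * 2 ^ 16) ^ K \<le> ((2::nat) ^ n) ^ K"
    using two_mult_sq_mult_pow16_le_pow2[OF n] by (rule power_mono) simp
  then have constrained_rows: "(2 * n * n) ^ K * 2 ^ (16 * K) \<le> (2::nat) ^ (n * K)"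
    by (simp only: power_mult_distrib[of "2 * n * n"] power_mult)
  have free_rows: "((2::nat) ^ n) ^ (n - 1 - K) = 2 ^ (n * (n - 1 - K))"
    by (simp add: power_mult)
  have choose_rows: "2 * (n - 1 choose K) \<le> 2 ^ n"
    using binomial_le_pow2[of "n - 1" K] n by (cases n) simp_all
  have exponents: "n + n + (n * K + n * (n - 1 - K)) \<le> (n * n - 3 * n) + 16 * K"
  proof -
    have "n * K + n * (n - 1 - K) = n * (n - 1)"
      using K by (metis add_mult_distrib2 le_add_diff_inverse)
    moreover have "n * (n - 1) + n = n * n"
      using n by (cases n) auto
    moreover have "3 * n \<le> n * n"
      using n by simp
    ultimately show ?thesis
      using K by linarith
  qed
  let ?L = "2 * ((n - 1 choose K) * (2 ^ n * ((2 * n * n) ^ K * (2 ^ n) ^ (n - 1 - K))))"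
  have "?L * 2 ^ (16 * K)
      = (2 * (n - 1 choose K)) * 2 ^ n * ((2 * n * n) ^ K * 2 ^ (16 * K)) * 2 ^ (n * (n - 1 - K))"
    unfolding free_rows by (simp only: ac_simps)
  also have "\<dots> \<le> 2 ^ n * 2 ^ n * 2 ^ (n * K) * 2 ^ (n * (n - 1 - K))"
    by (intro mult_le_mono choose_rows constrained_rows order.refl)
  also have "\<dots> = 2 ^ (n + n + (n * K + n * (n - 1 - K)))"
    by (simp add: power_add)
  also have "\<dots> \<le> 2 ^ ((n * n - 3 * n) + 16 * K)"
    by (rule power_increasing[OF exponents]) simp
  also have "\<dots> = 2 ^ (n * n - 3 * n) * 2 ^ (16 * K)"
    by (simp add: power_add)
  finally show ?thesis
    by simp
qed

lemma card_small_D11_le: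
  assumes "4 * K \<le> n + 3"
  shows "card {X \<in> bin_arrays n. 2 * card (D11 X) < n ^ 2}
           \<le> 2 * card {X \<in> bin_arrays n. K \<le> card (collision_rows X)}"
proof -
  let ?Rows = "{X \<in> bin_arrays n. K \<le> card (collision_rows X)}"
  let ?Cols = "{X \<in> bin_arrays n. K \<le> card (collision_rows (transpose X))}"
  have below_K: "4 * c < n" if "c < K" for c
    using that assms by linarith
  have "X \<in> ?Rows \<union> ?Cols" if X: "X \<in> bin_arrays n" and "2 * card (D11 X) < n ^ 2" for X
  proof (rule ccontr)
    assume "X \<notin> ?Rows \<union> ?Cols"
    then have "card (collision_rows X) < K" "card (collision_rows (transpose X)) < K"
      using X by auto
    then show False
      using card_D11_ge_half_sq[OF X below_K below_K] \<open>2 * card (D11 X) < n ^ 2\<close> by linarith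
  qed
  then have "{X \<in> bin_arrays n. 2 * card (D11 X) < n ^ 2} \<subseteq> ?Rows \<union> ?Cols"
    by blast
  then have "card {X \<in> bin_arrays n. 2 * card (D11 X) < n ^ 2} \<le> card (?Rows \<union> ?Cols)"
    by (intro card_mono) (simp add: finite_bin_arrays)
  also have "\<dots> \<le> card ?Rows + card ?Cols"
    by (rule card_Un_le)
  also have "\<dots> = 2 * card ?Rows"
    using card_bin_arrays_transpose[of n "\<lambda>Y. K \<le> card (collision_rows Y)"] by simp
  finally show ?thesis .
qed

lemma card_small_D11_le_pow2:
  assumes "54 \<le> n"
  shows "card {X \<in> bin_arrays n. 2 * card (D11 X) < n ^ 2} \<le> 2 ^ (n * n - 3 * n)"
proof -
  define K where "K = (n + 3) div 4"
  have K: "4 * K \<le> n + 3" "n \<le> 4 * K" "K \<le> n - 1"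
    using assms unfolding K_def by presburger+
  have "card {X \<in> bin_arrays n. 2 * card (D11 X) < n ^ 2}
      \<le> 2 * ((n - 1 choose K) * (2 ^ n * ((2 * n * n) ^ K * (2 ^ n) ^ (n - 1 - K))))"
    using card_small_D11_le[OF K(1)] card_bin_arrays_many_collision_rows_le[of n K] assms
    by linarith
  also have "\<dots> \<le> 2 ^ (n * n - 3 * n)"
    using assms K(2,3) by (rule collision_count_bound_le_pow2)
  finally show ?thesis .
qed

theorem lemma4:
  fixes n :: nat
  assumes "n \<ge> 54"
  shows "real (card {X \<in> bin_arrays n. real (card (D11 X)) < real n ^ 2 / 2})
           \<le> sqrt 2 * 2 powr (real (n ^ 2) - 3 * real n)"
proof -
  have "real c < real n ^ 2 / 2 \<longleftrightarrow> real (2 * c) < real (n ^ 2)" for c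
    by (simp add: mult.commute)
  then have "{X \<in> bin_arrays n. real (card (D11 X)) < real n ^ 2 / 2}
      = {X \<in> bin_arrays n. 2 * card (D11 X) < n ^ 2}"
    by (simp only: of_nat_less_iff)
  then have "real (card {X \<in> bin_arrays n. real (card (D11 X)) < real n ^ 2 / 2})
      \<le> real (2 ^ (n * n - 3 * n))"
    using card_small_D11_le_pow2[OF assms] by (simp only: of_nat_le_iff)
  also have "\<dots> = 2 powr (real (n ^ 2) - 3 * real n)"
    using assms by (simp add: powr_realpow[symmetric] of_nat_diff power2_eq_square)
  also have "\<dots> \<le> sqrt 2 * 2 powr (real (n ^ 2) - 3 * real n)"
    by (simp add: mult_le_cancel_right1)
  finally show ?thesis .
qed

end
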